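(* Let $G=(F\cup C,E)$ be a finite bipartite graph with $F\neq\emptyset$ and no isolated vertices. In one iteration of FacilitySelect on $G$, the expected number of clients removed is at least $|E|/|F|$.
   Context: Let $G=(F\cup C,E)$ be a finite bipartite graph with parts $F$ (facilities) and $C$ (clients). The facility graph $G_F=(F,E_F)$ has an edge $\{i,i'\}$ ($i\ne i'$) iff $i$ and $i'$ have a common neighbor in $G$. Write $\deg(\cdot)$, $N(\cdot)$ for degree/neighborhood in $G$, $\deg_F(\cdot)$, $N_F(\cdot)$ for those in $G_F$. One iteration of FacilitySelect: every $i\in F$ independently draws $r_i$ uniformly from $[0,1]$; let $I=\{i\in F: r_i>\max_{i'\in N_F(i)} r_{i'}\}$ (the maximum over the empty set being $-\infty$); then all vertices of $I\cup N(I)$ are deleted from $G$ together with all their incident edges. "Clients removed" are the clients in $N(I)$; "edges removed" are the edges incident to deleted vertices. FacilitySelect repeats iterations while $F\ne\emptyset$. *)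

theory Defs
  imports "HOL-Probability.Probability"
begin

definition bip_graph :: "'f set \<Rightarrow> 'c set \<Rightarrow> ('f \<times> 'c) set \<Rightarrow> bool" where
  "bip_graph F C E \<longleftrightarrow> finite F \<and> finite C \<and> E \<subseteq> F \<times> C"

definition no_isolated :: "'f set \<Rightarrow> 'c set \<Rightarrow> ('f \<times> 'c) set \<Rightarrow> bool" where
  "no_isolated F C E \<longleftrightarrow> (\<forall>i\<in>F. \<exists>j. (i, j) \<in> E) \<and> (\<forall>j\<in>C. \<exists>i. (i, j) \<in> E)"

definition fac_nbrs :: "'f set \<Rightarrow> ('f \<times> 'c) set \<Rightarrow> 'f \<Rightarrow> 'f set" where
  "fac_nbrs F E i = {i' \<in> F. i' \<noteq> i \<and> (\<exists>j. (i, j) \<in> E \<and> (i', j) \<in> E)}"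

text \<open>The set I of one FacilitySelect iteration, for random values r
  (maximum over the empty set is -\<infinity>, so isolated vertices of G_F are selected).\<close>
definition selected :: "'f set \<Rightarrow> ('f \<times> 'c) set \<Rightarrow> ('f \<Rightarrow> real) \<Rightarrow> 'f set" where
  "selected F E r = {i \<in> F. \<forall>i' \<in> fac_nbrs F E i. r i' < r i}"

definition clients_removed :: "'f set \<Rightarrow> ('f \<times> 'c) set \<Rightarrow> ('f \<Rightarrow> real) \<Rightarrow> 'c set" where
  "clients_removed F E r = {j. \<exists>i \<in> selected F E r. (i, j) \<in> E}"

definition rand_space :: "'f set \<Rightarrow> ('f \<Rightarrow> real) measure" where
  "rand_space F = PiM F (\<lambda>_. uniform_measure lborel {0..1::real})"

end

theory Submission imports Defs begin

(* A facility i is selected iff r_i exceeds r_{i'} for all i' in N_F(i);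
   by symmetry of the independent uniform values this happens with probability
   1/(|N_F(i)|+1) >= 1/|F|.  Two selected facilities are never adjacent in G_F, so
   their client neighbourhoods are disjoint and the number of removed clients is the
   sum of the degrees of the selected facilities.  Linearity of expectation gives
     E[#clients removed] = sum_i deg(i) * P(i selected) >= sum_i deg(i) / |F| = |E|/|F|. *)

abbreviation unif01 :: "real measure" where
  "unif01 \<equiv> uniform_measure lborel {0..1}"

lemma prob_space_unif01: "prob_space unif01"
  by (intro prob_space_uniform_measure) auto

lemma product_prob_space_unif01: "product_prob_space (\<lambda>_::'f. unif01)"
  by (intro product_prob_spaceI prob_space_unif01)

lemma emeasure_unif01_lessThan: "emeasure unif01 {..<y} = ennreal (max 0 (min y 1))"
proof -
  have "emeasure unif01 {..<y} = emeasure lborel ({0..1} \<inter> {..<y})"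
    by (simp add: divide_ennreal_def)
  moreover consider "y < 0" | "0 \<le> y" "y \<le> 1" | "1 < y" by linarith
  then have "emeasure lborel ({0..1} \<inter> {..<y}) = ennreal (max 0 (min y 1))"
  proof cases
    case 1 then have "{0..1} \<inter> {..<y} = {}" by auto
    then show ?thesis using 1 by simp
  next
    case 2 then have "{0..1} \<inter> {..<y} = {0..<y}" by auto
    then show ?thesis using 2 by simp
  next
    case 3 then have "{0..1} \<inter> {..<y} = {0..1}" by auto
    then show ?thesis using 3 by simp
  qed
  ultimately show ?thesis by simp
qed

lemma sets_coord_exceeds:
  "finite N \<Longrightarrow> N \<subseteq> F \<Longrightarrow> i \<in> F \<Longrightarrow>
    {r \<in> space (PiM F (\<lambda>_. unif01)). \<forall>i'\<in>N. r i' < r i} \<in> sets (PiM F (\<lambda>_. unif01))"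
  by measurable auto

lemma nn_integral_all_below:
  fixes I :: "'f set"
  assumes "finite I" "N \<subseteq> I"
  shows "(\<integral>\<^sup>+x. (if \<forall>i'\<in>N. x i' < y then 1 else 0) \<partial>PiM I (\<lambda>_. unif01))
           = ennreal (max 0 (min y 1) ^ card N)"
proof -
  interpret P: product_prob_space "\<lambda>_::'f. unif01" by (rule product_prob_space_unif01)
  let ?A = "\<lambda>i'. if i' \<in> N then {..<y} else UNIV"
  have "(\<integral>\<^sup>+x. (if \<forall>i'\<in>N. x i' < y then 1 else 0) \<partial>PiM I (\<lambda>_. unif01))
      = (\<integral>\<^sup>+x. indicator (PiE I ?A) x \<partial>PiM I (\<lambda>_. unif01))"
    by (intro nn_integral_cong) (use assms in \<open>auto simp: space_PiM PiE_iff indicator_def\<close>)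
  also have "\<dots> = emeasure (PiM I (\<lambda>_. unif01)) (PiE I ?A)"
    by (intro nn_integral_indicator sets_PiM_I_finite) (use assms in auto)
  also have "\<dots> = (\<Prod>i'\<in>I. emeasure unif01 (?A i'))"
    by (intro P.emeasure_PiM) (use assms in auto)
  also have "\<dots> = (\<Prod>i'\<in>I. if i' \<in> N then ennreal (max 0 (min y 1)) else 1)"
    using prob_space.emeasure_space_1[OF prob_space_unif01]
    by (intro prod.cong) (auto simp del: emeasure_uniform_measure simp: emeasure_unif01_lessThan)
  also have "\<dots> = ennreal (max 0 (min y 1)) ^ card N"
    using assms by (simp add: prod.If_cases Int_absorb1)
  also have "\<dots> = ennreal (max 0 (min y 1) ^ card N)"
    by (rule ennreal_power) auto
  finally show ?thesis .
qed

lemma nn_integral_unif01_power: "(\<integral>\<^sup>+y. ennreal (max 0 (min y 1) ^ n) \<partial>unif01) = ennreal (1 / (n + 1))"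
proof -
  have "(\<integral>\<^sup>+y. ennreal (max 0 (min y 1) ^ n) \<partial>unif01)
      = (\<integral>\<^sup>+y. ennreal (y ^ n) * indicator {0..1} y \<partial>lborel)"
    by (subst nn_integral_uniform_measure)
       (auto simp: divide_ennreal_def intro!: nn_integral_cong split: split_indicator)
  also have "\<dots> = ennreal ((\<lambda>y. y ^ Suc n / Suc n) 1 - (\<lambda>y. y ^ Suc n / Suc n) (0::real))"
  proof (rule nn_integral_FTC_Icc)
    fix x :: real
    have "((\<lambda>y. y ^ Suc n / real (Suc n)) has_real_derivative
           (real (Suc n) * x ^ (Suc n - Suc 0)) / real (Suc n)) (at x)"
      by (intro DERIV_cdivide DERIV_pow)
    then show "((\<lambda>y. y ^ Suc n / real (Suc n)) has_real_derivative x ^ n) (at x)"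
      by simp
  qed auto
  finally show ?thesis by simp
qed

lemma prob_coord_exceeds:
  fixes F :: "'f set"
  assumes fin: "finite F" and iF: "i \<in> F" and NF: "N \<subseteq> F - {i}"
  shows "emeasure (PiM F (\<lambda>_. unif01)) {r \<in> space (PiM F (\<lambda>_. unif01)). \<forall>i'\<in>N. r i' < r i}
     = ennreal (1 / (card N + 1))"
proof -
  interpret P: product_prob_space "\<lambda>_::'f. unif01" by (rule product_prob_space_unif01)
  define I where "I = F - {i}"
  have FI: "F = insert i I" "i \<notin> I" "finite I" and NI: "N \<subseteq> I"
    using iF fin NF by (auto simp: I_def)
  have fN: "finite N" using NI FI(3) finite_subset by blast
  let ?S = "{r \<in> space (PiM F (\<lambda>_. unif01)). \<forall>i'\<in>N. r i' < r i}"
  let ?below = "\<lambda>x y. if \<forall>i'\<in>N. x i' < y then 1 else (0::ennreal)"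
  have S: "?S \<in> sets (PiM F (\<lambda>_. unif01))"
    using sets_coord_exceeds[OF fN _ iF] NF by auto
  have "emeasure (PiM F (\<lambda>_. unif01)) ?S
      = (\<integral>\<^sup>+r. indicator ?S r \<partial>PiM (insert i I) (\<lambda>_. unif01))"
    using S FI by simp
  also have "\<dots> = (\<integral>\<^sup>+x. \<integral>\<^sup>+y. indicator ?S (x(i:=y)) \<partial>unif01 \<partial>PiM I (\<lambda>_. unif01))"
    by (rule P.product_nn_integral_insert) (use FI S in auto)
  also have "\<dots> = (\<integral>\<^sup>+x. \<integral>\<^sup>+y. ?below x y \<partial>unif01 \<partial>PiM I (\<lambda>_. unif01))"
  proof (intro nn_integral_cong)
    fix x y assume "x \<in> space (PiM I (\<lambda>_. unif01))"
    then have "x(i:=y) \<in> space (PiM F (\<lambda>_. unif01))" using FI by (auto simp: space_PiM PiE_iff)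
    moreover have "i \<notin> N" using NF by auto
    ultimately show "indicator ?S (x(i:=y)) = ?below x y"
      by (auto simp: indicator_def)
  qed
  also have "\<dots> = (\<integral>\<^sup>+y. \<integral>\<^sup>+x. ?below x y \<partial>PiM I (\<lambda>_. unif01) \<partial>unif01)"
  proof -
    have "prob_space (PiM I (\<lambda>_. unif01))" by (intro prob_space_PiM prob_space_unif01)
    then interpret Q: pair_sigma_finite "PiM I (\<lambda>_. unif01)" unif01
      by (intro pair_sigma_finite.intro prob_space_imp_sigma_finite prob_space_unif01)
    have [measurable]: "snd \<in> borel_measurable (PiM I (\<lambda>_. unif01) \<Otimes>\<^sub>M unif01)"
      using measurable_snd[of "PiM I (\<lambda>_. unif01)" unif01]
        measurable_cong_sets[of _ _ unif01 borel] by simp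
    show ?thesis
      by (rule Q.Fubini'[symmetric]) (measurable, use NI fN in auto)
  qed
  also have "\<dots> = (\<integral>\<^sup>+y. ennreal (max 0 (min y 1) ^ card N) \<partial>unif01)"
    using nn_integral_all_below[OF FI(3) NI] by simp
  also have "\<dots> = ennreal (1 / (card N + 1))"
    using nn_integral_unif01_power[of "card N"] by simp
  finally show ?thesis .
qed

definition fac_deg :: "('f \<times> 'c) set \<Rightarrow> 'f \<Rightarrow> nat" where
  "fac_deg E i = card {j. (i, j) \<in> E}"

lemma card_edges_sum_fac_deg:
  assumes "finite F" "E \<subseteq> F \<times> C" "finite C"
  shows "card E = (\<Sum>i\<in>F. fac_deg E i)"
proof -
  have "E = (SIGMA i:F. {j. (i, j) \<in> E})" using assms(2) by auto
  moreover have "finite {j. (i, j) \<in> E}" for i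
    using assms(2,3) by (auto intro: finite_subset)
  ultimately show ?thesis
    unfolding fac_deg_def using card_SigmaI[OF assms(1)] by metis
qed

lemma selected_disjoint_clients:
  assumes "i \<in> selected F E r" "i' \<in> selected F E r" "i \<noteq> i'"
  shows "{j. (i, j) \<in> E} \<inter> {j. (i', j) \<in> E} = {}"
proof (rule ccontr)
  assume "{j. (i, j) \<in> E} \<inter> {j. (i', j) \<in> E} \<noteq> {}"
  then obtain j where "(i, j) \<in> E" "(i', j) \<in> E" by auto
  then have "i' \<in> fac_nbrs F E i" "i \<in> fac_nbrs F E i'"
    using assms by (auto simp: fac_nbrs_def selected_def)
  then have "r i' < r i" "r i < r i'" using assms by (auto simp: selected_def)
  then show False by simp
qed

lemma card_clients_removed:
  assumes "finite F" "finite E"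
  shows "real (card (clients_removed F E r))
           = (\<Sum>i\<in>F. real (fac_deg E i) * indicator {r. i \<in> selected F E r} r)"
proof -
  have sel: "selected F E r \<subseteq> F" by (auto simp: selected_def)
  have "clients_removed F E r = (\<Union>i\<in>selected F E r. {j. (i, j) \<in> E})"
    by (auto simp: clients_removed_def)
  also have "card \<dots> = (\<Sum>i\<in>selected F E r. fac_deg E i)"
    unfolding fac_deg_def
  proof (rule card_UN_disjoint)
    show "finite (selected F E r)" using finite_subset[OF sel assms(1)] .
    show "\<forall>i\<in>selected F E r. finite {j. (i, j) \<in> E}"
    proof
      fix i show "finite {j. (i, j) \<in> E}"
        using finite_subset[of "{j. (i, j) \<in> E}" "snd ` E"] assms(2) by force
    qed
  qed (use selected_disjoint_clients[of _ F E r] in blast)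
  finally have "real (card (clients_removed F E r)) = (\<Sum>i\<in>F \<inter> selected F E r. real (fac_deg E i))"
    using sel by (simp add: Int_absorb1)
  also have "\<dots> = (\<Sum>i\<in>F. real (fac_deg E i) * indicator {r. i \<in> selected F E r} r)"
    by (subst sum.inter_restrict[OF assms(1)]) (auto intro!: sum.cong simp: indicator_def)
  finally show ?thesis .
qed

lemma prob_selected:
  assumes "finite F" "i \<in> F"
  shows "measure (rand_space F) {r \<in> space (rand_space F). i \<in> selected F E r} \<ge> 1 / real (card F)"
proof -
  have nbF: "fac_nbrs F E i \<subseteq> F - {i}" by (auto simp: fac_nbrs_def)
  have "{r \<in> space (rand_space F). i \<in> selected F E r}
      = {r \<in> space (rand_space F). \<forall>i'\<in>fac_nbrs F E i. r i' < r i}"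
    using assms(2) by (auto simp: selected_def)
  then have m: "measure (rand_space F) {r \<in> space (rand_space F). i \<in> selected F E r}
                  = 1 / (card (fac_nbrs F E i) + 1)"
    using prob_coord_exceeds[OF assms nbF] by (simp add: measure_def rand_space_def)
  have "card (fac_nbrs F E i) \<le> card (F - {i})"
    by (intro card_mono nbF) (use assms in auto)
  moreover have "card (F - {i}) = card F - 1" "card F > 0"
    using assms card_gt_0_iff by auto
  ultimately have "real (card (fac_nbrs F E i) + 1) \<le> real (card F)" by linarith
  then show ?thesis unfolding m by (intro divide_left_mono) auto
qed

theorem lemma3:
  fixes F :: "'f set" and C :: "'c set" and E :: "('f \<times> 'c) set"
  assumes "bip_graph F C E" and "F \<noteq> {}" and "no_isolated F C E"
  shows "(\<integral>r. real (card (clients_removed F E r)) \<partial>rand_space F)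
           \<ge> real (card E) / real (card F)"
proof -
  have finF: "finite F" and finC: "finite C" and EFC: "E \<subseteq> F \<times> C"
    using assms(1) by (auto simp: bip_graph_def)
  have finE: "finite E" using finite_subset[OF EFC] finF finC by blast
  let ?P = "rand_space F"
  interpret prob_space ?P unfolding rand_space_def by (intro prob_space_PiM prob_space_unif01)
  define A where "A i = {r \<in> space ?P. i \<in> selected F E r}" for i
  have A: "A i \<in> sets ?P" if "i \<in> F" for i
  proof -
    have "A i = {r \<in> space ?P. \<forall>i'\<in>fac_nbrs F E i. r i' < r i}"
      using that by (auto simp: A_def selected_def)
    moreover have "fac_nbrs F E i \<subseteq> F" "finite (fac_nbrs F E i)"
      using finF by (auto simp: fac_nbrs_def)
    ultimately show ?thesis
      unfolding rand_space_def using sets_coord_exceeds[OF _ _ that] by simp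
  qed
  have "(\<integral>r. real (card (clients_removed F E r)) \<partial>?P)
      = (\<integral>r. (\<Sum>i\<in>F. real (fac_deg E i) * indicator (A i) r) \<partial>?P)"
    by (intro Bochner_Integration.integral_cong refl)
       (auto simp: card_clients_removed[OF finF finE] A_def indicator_def intro!: sum.cong)
  also have "\<dots> = (\<Sum>i\<in>F. real (fac_deg E i) * prob (A i))"
    using A by (subst Bochner_Integration.integral_sum)
      (auto intro!: integrable_real_indicator simp: emeasure_finite less_top[symmetric])
  also have "\<dots> \<ge> (\<Sum>i\<in>F. real (fac_deg E i) * (1 / real (card F)))"
    using prob_selected[OF finF] by (intro sum_mono mult_left_mono) (auto simp: A_def)
  moreover have "(\<Sum>i\<in>F. real (fac_deg E i) * (1 / real (card F))) = real (card E) / real (card F)"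
    using card_edges_sum_fac_deg[OF finF EFC finC] by (simp add: sum_divide_distrib)
  ultimately show ?thesis by simp
qed

end
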